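(* The constant allocation $s\equiv\tfrac12$ maximizes $W_0(s)=\int_0^{\bar\theta}\frac{1-F(\theta)}{f(\theta)}s(\theta)\,dF(\theta)$ over $\mathcal S(0)$ if and only if $$\int_0^\theta\Big(\frac{1-F(x)}{f(x)}-\mathbb E[\theta]\Big)dF(x)\ \ge\ 0\qquad\text{for all }\theta\in[0,\bar\theta],$$ where $\mathbb E[\theta]=\int_0^{\bar\theta}x\,dF(x)$.
   Context: Let $0<\bar\theta<\infty$, $\Theta=[0,\bar\theta]$, $F$ a cdf on $\Theta$ with continuous, strictly positive density $f$, $dF=f\,d\theta$. For bounded measurable $a,b$ on $\Theta$, write $b\in\mathrm{MPS}(a)$ if $\int_x^{\bar\theta}b\,dF\le\int_x^{\bar\theta}a\,dF$ for all $x\in\Theta$, with equality at $x=0$. $\mathcal S(0)$ is the set of nondecreasing $s:\Theta\to[0,1]$ with $s\in\mathrm{MPS}(F)$ (feasible interim statuses when exclusion is impossible). $s\equiv\frac12$ corresponds to offering a single (free) level. *)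

theory Defs
  imports "HOL-Analysis.Analysis"
begin

text \<open>Type space Theta = [0, thbar]; the distribution F has density f, dF = f d theta.\<close>

definition cdf :: "(real \<Rightarrow> real) \<Rightarrow> real \<Rightarrow> real" where
  "cdf f x = integral {0..x} f"

definition intF :: "(real \<Rightarrow> real) \<Rightarrow> real \<Rightarrow> real \<Rightarrow> (real \<Rightarrow> real) \<Rightarrow> real" where
  "intF f a b g = integral {a..b} (\<lambda>t. g t * f t)"

definition MPS :: "real \<Rightarrow> (real \<Rightarrow> real) \<Rightarrow> (real \<Rightarrow> real) \<Rightarrow> (real \<Rightarrow> real) set" where
  "MPS thbar f a = {b. bounded (a ` {0..thbar}) \<and> bounded (b ` {0..thbar})
      \<and> a measurable_on {0..thbar} \<and> b measurable_on {0..thbar}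
      \<and> (\<forall>x\<in>{0..thbar}. intF f x thbar b \<le> intF f x thbar a)
      \<and> intF f 0 thbar b = intF f 0 thbar a}"

definition S0 :: "real \<Rightarrow> (real \<Rightarrow> real) \<Rightarrow> (real \<Rightarrow> real) set" where
  "S0 thbar f = {s. mono_on {0..thbar} s \<and> s ` {0..thbar} \<subseteq> {0..1}
      \<and> s \<in> MPS thbar f (cdf f)}"

definition W0 :: "real \<Rightarrow> (real \<Rightarrow> real) \<Rightarrow> (real \<Rightarrow> real) \<Rightarrow> real" where
  "W0 thbar f s = intF f 0 thbar (\<lambda>t. (1 - cdf f t) / f t * s t)"

definition mean :: "real \<Rightarrow> (real \<Rightarrow> real) \<Rightarrow> real" where
  "mean thbar f = intF f 0 thbar (\<lambda>x. x)"

end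

theory Submission
  imports Defs
begin

text \<open>With \<open>g = 1 - F - E[\<theta>] f\<close> (\<open>rent_gap\<close>, the Lebesgue density of \<open>((1 - F)/f - E[\<theta>]) dF\<close>) and
  \<open>G(t) = \<integral>\<^sub>0\<^sup>t g\<close>, integration by parts gives \<open>G(\<theta>bar) = 0\<close> and
  \<open>W\<^sub>0(s) = \<integral> s g + E[\<theta>] \<integral> s dF\<close>, where \<open>\<integral> s dF = 1/2\<close> on \<open>S(0)\<close>.
  Hence \<open>W\<^sub>0(s) - W\<^sub>0(1/2) = \<integral> s g\<close>. If \<open>G \<ge> 0\<close>, the second mean value theorem
  writes this as \<open>(s(0) - s(\<theta>bar)) G(c) \<le> 0\<close> for a monotone \<open>s\<close>. Conversely, if
  \<open>G(t\<^sub>0) < 0\<close>, the allocation of two levels split at \<open>t\<^sub>0\<close> lies in \<open>S(0)\<close> and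
  gives \<open>\<integral> s g = -G(t\<^sub>0)/2 > 0\<close>.\<close>

lemma integrable_on_imp_measurable_on:
  fixes f :: "'a::euclidean_space \<Rightarrow> 'b::euclidean_space"
  assumes "f integrable_on S" "S \<in> sets lebesgue"
  shows "f measurable_on S"
  using assms integrable_imp_measurable measurable_on_iff_borel_measurable by blast

lemma mono_on_mult_integrable_on:
  fixes s h :: "real \<Rightarrow> real"
  assumes "mono_on {a..b} s" "h integrable_on {a..b}"
  shows "(\<lambda>x. s x * h x) integrable_on {a..b}"
proof (cases "a \<le> b")
  case True
  have "\<And>x y. a \<le> x \<Longrightarrow> x \<le> y \<Longrightarrow> y \<le> b \<Longrightarrow> s x \<le> s y"
    using assms(1) by (auto intro: mono_onD)
  then show ?thesis
    using second_mean_value_theorem_full[OF assms(2) True, of s] by blast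
qed (simp add: integrable_on_empty)

lemma has_integral_step_mult:
  fixes h :: "real \<Rightarrow> real"
  assumes "x \<le> y" "y \<le> z" "(h has_integral I) {x..y}" "(h has_integral J) {y..z}"
  shows "((\<lambda>t. (if t < y then a else b) * h t) has_integral (a * I + b * J)) {x..z}"
proof (rule has_integral_combine[OF assms(1,2)])
  show "((\<lambda>t. (if t < y then a else b) * h t) has_integral (a * I)) {x..y}"
    by (rule has_integral_spike[where S="{y}" and f="\<lambda>t. a * h t"])
       (auto intro: has_integral_mult_right assms)
  show "((\<lambda>t. (if t < y then a else b) * h t) has_integral (b * J)) {y..z}"
    by (rule has_integral_spike[where S="{}" and f="\<lambda>t. b * h t"])
       (auto intro: has_integral_mult_right assms)
qed

lemma has_integral_diff_of_derivative_within:
  fixes G g :: "real \<Rightarrow> real"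
  assumes "a \<le> u" "u \<le> v" "v \<le> b"
    and "\<And>x. x \<in> {a..b} \<Longrightarrow> (G has_real_derivative g x) (at x within {a..b})"
  shows "(g has_integral (G v - G u)) {u..v}"
proof (rule fundamental_theorem_of_calculus[OF assms(2)])
  fix x assume "x \<in> {u..v}"
  then have "(G has_real_derivative g x) (at x within {u..v})"
    using assms by (intro DERIV_subset[OF assms(4)]) auto
  then show "(G has_vector_derivative g x) (at x within {u..v})"
    by (simp add: has_real_derivative_iff_has_vector_derivative)
qed

lemma cdf_0 [simp]: "cdf f 0 = 0"
  by (simp add: cdf_def)

locale interval_density =
  fixes thbar :: real and f :: "real \<Rightarrow> real"
  assumes thbar_pos: "0 < thbar"
    and continuous_density: "continuous_on {0..thbar} f"
    and density_pos: "\<forall>t\<in>{0..thbar}. 0 < f t"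
    and cdf_thbar: "cdf f thbar = 1"
begin

lemma density_nonzero: "x \<in> {0..thbar} \<Longrightarrow> f x \<noteq> 0"
  using density_pos by fastforce

lemma cdf_has_real_derivative:
  "x \<in> {0..thbar} \<Longrightarrow> (cdf f has_real_derivative f x) (at x within {0..thbar})"
  unfolding cdf_def[abs_def] has_real_derivative_iff_has_vector_derivative
  by (rule integral_has_vector_derivative[OF continuous_density])

lemma continuous_on_cdf: "continuous_on {0..thbar} (cdf f)"
  using cdf_has_real_derivative DERIV_continuous_on by blast

lemma density_has_integral:
  "0 \<le> u \<Longrightarrow> u \<le> v \<Longrightarrow> v \<le> thbar \<Longrightarrow> (f has_integral (cdf f v - cdf f u)) {u..v}"
  by (rule has_integral_diff_of_derivative_within) (auto intro: cdf_has_real_derivative)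

lemma cdf_mult_density_has_integral:
  assumes "0 \<le> u" "u \<le> v" "v \<le> thbar"
  shows "((\<lambda>t. cdf f t * f t) has_integral ((cdf f v)\<^sup>2 / 2 - (cdf f u)\<^sup>2 / 2)) {u..v}"
proof (rule has_integral_diff_of_derivative_within[OF assms])
  fix x assume "x \<in> {0..thbar}"
  note cdf_has_real_derivative[OF this]
  then show "((\<lambda>t. (cdf f t)\<^sup>2 / 2) has_real_derivative cdf f x * f x) (at x within {0..thbar})"
    by (auto intro!: derivative_eq_intros)
qed

lemma survival_has_integral_mean: "((\<lambda>t. 1 - cdf f t) has_integral mean thbar f) {0..thbar}"
proof -
  have "((\<lambda>t. (cdf f t - 1) + t * f t) has_integral (thbar * (cdf f thbar - 1) - 0 * (cdf f 0 - 1)))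
          {0..thbar}"
  proof (rule has_integral_diff_of_derivative_within[where G="\<lambda>t. t * (cdf f t - 1)"])
    fix x assume "x \<in> {0..thbar}"
    note cdf_has_real_derivative[OF this]
    then show "((\<lambda>t. t * (cdf f t - 1)) has_real_derivative (cdf f x - 1) + x * f x)
                 (at x within {0..thbar})"
      by (auto intro!: derivative_eq_intros)
  qed (use thbar_pos in auto)
  then have "((\<lambda>t. (cdf f t - 1) + t * f t) has_integral 0) {0..thbar}"
    using cdf_thbar by simp
  moreover have "((\<lambda>t. t * f t) has_integral mean thbar f) {0..thbar}"
    unfolding mean_def intF_def
    by (intro integrable_integral integrable_continuous_interval continuous_intros continuous_density)
  ultimately have "((\<lambda>t. t * f t - ((cdf f t - 1) + t * f t)) has_integral (mean thbar f - 0)) {0..thbar}"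
    by (rule has_integral_diff[rotated])
  then show ?thesis by simp
qed

lemma cdf_mono:
  assumes "0 \<le> u" "u \<le> v" "v \<le> thbar"
  shows "cdf f u \<le> cdf f v"
proof -
  have "0 \<le> cdf f v - cdf f u"
    by (rule has_integral_nonneg[OF density_has_integral[OF assms]])
       (use density_pos assms in \<open>auto intro!: less_imp_le\<close>)
  then show ?thesis by simp
qed

lemma cdf_in_01: "x \<in> {0..thbar} \<Longrightarrow> cdf f x \<in> {0..1}"
  using cdf_mono[of 0 x] cdf_mono[of x thbar] cdf_thbar by auto

lemma intF_cdf_tail: "x \<in> {0..thbar} \<Longrightarrow> intF f x thbar (cdf f) = (1 - (cdf f x)\<^sup>2) / 2"
  using cdf_mult_density_has_integral[of x thbar] cdf_thbar
  unfolding intF_def by (simp add: integral_unique)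

lemma intF_const_tail: "x \<in> {0..thbar} \<Longrightarrow> intF f x thbar (\<lambda>_. c) = c * (1 - cdf f x)"
  using integral_unique[OF density_has_integral[of x thbar]] cdf_thbar
  unfolding intF_def by simp

lemma in_S0I:
  assumes "mono_on {0..thbar} s" "s ` {0..thbar} \<subseteq> {0..1}"
    and "\<And>x. x \<in> {0..thbar} \<Longrightarrow> intF f x thbar s \<le> intF f x thbar (cdf f)"
    and "intF f 0 thbar s = intF f 0 thbar (cdf f)"
  shows "s \<in> S0 thbar f"
proof -
  have "bounded (g ` {0..thbar})" if "g ` {0..thbar} \<subseteq> {0..1}" for g :: "real \<Rightarrow> real"
    using that bounded_closed_interval bounded_subset by blast
  moreover have "cdf f ` {0..thbar} \<subseteq> {0..1}"
    using cdf_in_01 by blast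
  moreover have "s measurable_on {0..thbar}" "cdf f measurable_on {0..thbar}"
    using integrable_on_mono_on[OF assms(1)] integrable_continuous_interval[OF continuous_on_cdf]
    by (auto intro: integrable_on_imp_measurable_on)
  ultimately show ?thesis
    using assms unfolding S0_def MPS_def by blast
qed

lemma intF_S0: "s \<in> S0 thbar f \<Longrightarrow> intF f 0 thbar s = 1/2"
  using intF_cdf_tail[of 0] thbar_pos by (simp add: S0_def MPS_def)

lemma half_in_S0: "(\<lambda>_. 1/2) \<in> S0 thbar f"
proof (rule in_S0I)
  fix x assume x: "x \<in> {0..thbar}"
  have "(cdf f x)\<^sup>2 \<le> cdf f x"
    using cdf_in_01[OF x] by (simp add: power2_eq_square mult_left_le)
  then show "intF f x thbar (\<lambda>_. 1/2) \<le> intF f x thbar (cdf f)"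
    using intF_const_tail[OF x] intF_cdf_tail[OF x] by simp
qed (use intF_const_tail[of 0] intF_cdf_tail[of 0] thbar_pos in \<open>auto simp: mono_on_def\<close>)

definition rent_gap :: "real \<Rightarrow> real" where
  "rent_gap t = 1 - cdf f t - mean thbar f * f t"

lemma rent_gap_integrable_on: "{a..b} \<subseteq> {0..thbar} \<Longrightarrow> rent_gap integrable_on {a..b}"
  unfolding rent_gap_def
  by (intro integrable_continuous_interval continuous_intros continuous_on_subset[OF continuous_on_cdf]
        continuous_on_subset[OF continuous_density])

lemma intF_eq_integral_rent_gap:
  "t \<in> {0..thbar} \<Longrightarrow> intF f 0 t (\<lambda>x. (1 - cdf f x) / f x - mean thbar f) = integral {0..t} rent_gap"
  unfolding intF_def rent_gap_def
  by (rule integral_cong) (use density_nonzero in \<open>auto simp: field_simps\<close>)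

lemma rent_gap_has_integral_0: "(rent_gap has_integral 0) {0..thbar}"
proof -
  have "((\<lambda>t. mean thbar f * f t) has_integral (mean thbar f * 1)) {0..thbar}"
    using has_integral_mult_right[OF density_has_integral[of 0 thbar]] thbar_pos cdf_thbar by simp
  from has_integral_diff[OF survival_has_integral_mean this] show ?thesis
    by (simp add: rent_gap_def[abs_def])
qed

lemma integral_rent_gap_tail: "c \<in> {0..thbar} \<Longrightarrow> integral {c..thbar} rent_gap = - integral {0..c} rent_gap"
  using Henstock_Kurzweil_Integration.integral_combine[where a=0 and c=c and b=thbar and f=rent_gap]
    rent_gap_integrable_on[of 0 thbar]
    integral_unique[OF rent_gap_has_integral_0]
  by auto

lemma W0_eq_integral_rent_gap:
  assumes "mono_on {0..thbar} s"
  shows "W0 thbar f s = integral {0..thbar} (\<lambda>x. s x * rent_gap x) + mean thbar f * intF f 0 thbar s"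
proof -
  have gap: "(\<lambda>x. s x * rent_gap x) integrable_on {0..thbar}"
    and density: "(\<lambda>x. s x * f x) integrable_on {0..thbar}"
    using mono_on_mult_integrable_on[OF assms] rent_gap_integrable_on
      integrable_continuous_interval[OF continuous_density] by auto
  have "W0 thbar f s = integral {0..thbar} (\<lambda>x. s x * rent_gap x + mean thbar f * (s x * f x))"
    unfolding W0_def intF_def rent_gap_def
    by (rule integral_cong) (use density_nonzero in \<open>auto simp: field_simps\<close>)
  then show ?thesis
    unfolding intF_def by (simp add: integral_add[OF gap integrable_on_mult_right[OF density]])
qed

lemma W0_eq_W0_half_plus:
  assumes "s \<in> S0 thbar f"
  shows "W0 thbar f s = W0 thbar f (\<lambda>_. 1/2) + integral {0..thbar} (\<lambda>x. s x * rent_gap x)"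
proof -
  have "integral {0..thbar} (\<lambda>x. 1/2 * rent_gap x) = 0"
    by (rule integral_unique) (use has_integral_mult_right[OF rent_gap_has_integral_0, of "1/2"] in simp)
  then have half: "W0 thbar f (\<lambda>_. 1/2) = mean thbar f * (1/2)"
    using W0_eq_integral_rent_gap[of "\<lambda>_. 1/2"] intF_S0[OF half_in_S0] by (simp add: mono_on_def)
  have "mono_on {0..thbar} s"
    using assms by (simp add: S0_def)
  from W0_eq_integral_rent_gap[OF this] show ?thesis
    unfolding intF_S0[OF assms] half by simp
qed

lemma integral_mono_mult_rent_gap_nonpos:
  assumes mono: "mono_on {0..thbar} s"
    and nonneg: "\<And>t. t \<in> {0..thbar} \<Longrightarrow> integral {0..t} rent_gap \<ge> 0"
  shows "integral {0..thbar} (\<lambda>x. s x * rent_gap x) \<le> 0"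
proof -
  have mono_le: "\<And>x y. 0 \<le> x \<Longrightarrow> x \<le> y \<Longrightarrow> y \<le> thbar \<Longrightarrow> s x \<le> s y"
    using mono by (auto intro: mono_onD)
  obtain c where c: "c \<in> {0..thbar}"
    and "integral {0..thbar} (\<lambda>x. s x * rent_gap x)
           = s 0 * integral {0..c} rent_gap + s thbar * integral {c..thbar} rent_gap"
    using second_mean_value_theorem[where g=s, OF rent_gap_integrable_on[of 0 thbar]
        less_imp_le[OF thbar_pos] mono_le]
    by auto
  then have "integral {0..thbar} (\<lambda>x. s x * rent_gap x) = (s 0 - s thbar) * integral {0..c} rent_gap"
    using integral_rent_gap_tail[OF c] by (simp add: algebra_simps)
  moreover have "s 0 \<le> s thbar"
    using mono thbar_pos by (auto intro: mono_onD)
  ultimately show ?thesis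
    using nonneg[OF c] by (simp add: mult_nonpos_nonneg)
qed

text \<open>Two levels split at \<open>t\<^sub>0\<close>: a type below \<open>t\<^sub>0\<close> is ranked uniformly within the lower
  group of mass \<open>F(t\<^sub>0)\<close>, a type above it uniformly within the upper group.\<close>

definition two_level :: "real \<Rightarrow> real \<Rightarrow> real" where
  "two_level t\<^sub>0 x = (if x < t\<^sub>0 then cdf f t\<^sub>0 / 2 else (1 + cdf f t\<^sub>0) / 2)"

lemma intF_two_level_tail:
  assumes t\<^sub>0: "t\<^sub>0 \<in> {0..thbar}" and x: "x \<in> {0..thbar}"
  defines "p \<equiv> cdf f t\<^sub>0"
  shows "intF f x thbar (two_level t\<^sub>0)
           = (if x < t\<^sub>0 then 1/2 - p * cdf f x / 2 else (1 + p) / 2 * (1 - cdf f x))"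
proof (cases "x < t\<^sub>0")
  case True
  have "((\<lambda>t. (if t < t\<^sub>0 then p/2 else (1 + p)/2) * f t) has_integral
          (p/2 * (cdf f t\<^sub>0 - cdf f x) + (1 + p)/2 * (cdf f thbar - cdf f t\<^sub>0))) {x..thbar}"
    using t\<^sub>0 x True by (intro has_integral_step_mult density_has_integral) auto
  then show ?thesis
    using True cdf_thbar unfolding intF_def two_level_def p_def
    by (simp add: integral_unique field_simps)
next
  case False
  then have "intF f x thbar (two_level t\<^sub>0) = intF f x thbar (\<lambda>_. (1 + p) / 2)"
    unfolding intF_def two_level_def p_def by (intro integral_cong) auto
  then show ?thesis
    using False intF_const_tail[OF x] by simp
qed

lemma two_level_in_S0:
  assumes t\<^sub>0: "t\<^sub>0 \<in> {0..thbar}"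
  shows "two_level t\<^sub>0 \<in> S0 thbar f"
proof (rule in_S0I)
  have p: "cdf f t\<^sub>0 \<in> {0..1}"
    using cdf_in_01[OF t\<^sub>0] .
  then show "mono_on {0..thbar} (two_level t\<^sub>0)" "two_level t\<^sub>0 ` {0..thbar} \<subseteq> {0..1}"
    unfolding two_level_def mono_on_def by auto
  fix x assume x: "x \<in> {0..thbar}"
  have Fx: "cdf f x \<in> {0..1}"
    using cdf_in_01[OF x] .
  show "intF f x thbar (two_level t\<^sub>0) \<le> intF f x thbar (cdf f)"
  proof (cases "x < t\<^sub>0")
    case True
    then have "cdf f x * cdf f x \<le> cdf f t\<^sub>0 * cdf f x"
      using cdf_mono[of x t\<^sub>0] x t\<^sub>0 Fx by (intro mult_right_mono) auto
    then show ?thesis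
      using True intF_two_level_tail[OF t\<^sub>0 x] intF_cdf_tail[OF x]
      by (simp add: power2_eq_square field_simps)
  next
    case False
    then have "(1 - cdf f x) * (1 + cdf f t\<^sub>0) \<le> (1 - cdf f x) * (1 + cdf f x)"
      using cdf_mono[of t\<^sub>0 x] x t\<^sub>0 Fx by (intro mult_left_mono) auto
    then show ?thesis
      using False intF_two_level_tail[OF t\<^sub>0 x] intF_cdf_tail[OF x]
      by (simp add: power2_eq_square algebra_simps)
  qed
next
  show "intF f 0 thbar (two_level t\<^sub>0) = intF f 0 thbar (cdf f)"
    using intF_two_level_tail[OF t\<^sub>0, of 0] intF_cdf_tail[of 0] thbar_pos t\<^sub>0
    by (cases "t\<^sub>0 = 0") auto
qed

lemma integral_two_level_mult_rent_gap:
  assumes t\<^sub>0: "t\<^sub>0 \<in> {0..thbar}"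
  shows "integral {0..thbar} (\<lambda>x. two_level t\<^sub>0 x * rent_gap x) = - integral {0..t\<^sub>0} rent_gap / 2"
proof -
  have "((\<lambda>x. two_level t\<^sub>0 x * rent_gap x) has_integral
          (cdf f t\<^sub>0 / 2 * integral {0..t\<^sub>0} rent_gap + (1 + cdf f t\<^sub>0) / 2 * integral {t\<^sub>0..thbar} rent_gap))
          {0..thbar}"
    unfolding two_level_def
    using t\<^sub>0 by (intro has_integral_step_mult integrable_integral rent_gap_integrable_on) auto
  then show ?thesis
    unfolding integral_rent_gap_tail[OF t\<^sub>0] by (simp add: integral_unique field_simps)
qed

lemma W0_half_optimal_iff:
  "(\<forall>s\<in>S0 thbar f. W0 thbar f s \<le> W0 thbar f (\<lambda>_. 1/2))
     \<longleftrightarrow> (\<forall>t\<in>{0..thbar}. integral {0..t} rent_gap \<ge> 0)"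
proof (intro iffI ballI)
  fix t assume opt: "\<forall>s\<in>S0 thbar f. W0 thbar f s \<le> W0 thbar f (\<lambda>_. 1/2)"
    and t: "t \<in> {0..thbar}"
  have "integral {0..thbar} (\<lambda>x. two_level t x * rent_gap x) \<le> 0"
    using opt W0_eq_W0_half_plus[OF two_level_in_S0[OF t]] two_level_in_S0[OF t] by fastforce
  then show "integral {0..t} rent_gap \<ge> 0"
    unfolding integral_two_level_mult_rent_gap[OF t] by simp
next
  fix s assume nonneg: "\<forall>t\<in>{0..thbar}. integral {0..t} rent_gap \<ge> 0"
    and s: "s \<in> S0 thbar f"
  then have "integral {0..thbar} (\<lambda>x. s x * rent_gap x) \<le> 0"
    by (intro integral_mono_mult_rent_gap_nonpos) (auto simp: S0_def)
  then show "W0 thbar f s \<le> W0 thbar f (\<lambda>_. 1/2)"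
    unfolding W0_eq_W0_half_plus[OF s] by simp
qed

end

theorem mainTheorem15:
  fixes thbar :: real and f :: "real \<Rightarrow> real"
  assumes "0 < thbar"
    and "continuous_on {0..thbar} f"
    and "\<forall>t\<in>{0..thbar}. 0 < f t"
    and "cdf f thbar = 1"
  shows "((\<lambda>_. 1/2) \<in> S0 thbar f \<and> (\<forall>s\<in>S0 thbar f. W0 thbar f s \<le> W0 thbar f (\<lambda>_. 1/2)))
     \<longleftrightarrow> (\<forall>t\<in>{0..thbar}.
            intF f 0 t (\<lambda>x. (1 - cdf f x) / f x - mean thbar f) \<ge> 0)"
proof -
  interpret interval_density thbar f
    using assms by unfold_locales
  have "(\<forall>t\<in>{0..thbar}. intF f 0 t (\<lambda>x. (1 - cdf f x) / f x - mean thbar f) \<ge> 0)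
          \<longleftrightarrow> (\<forall>t\<in>{0..thbar}. integral {0..t} rent_gap \<ge> 0)"
    using intF_eq_integral_rent_gap by simp
  then show ?thesis
    using half_in_S0 W0_half_optimal_iff by blast
qed

end
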